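(* Let $N\geq 2$, $k\geq 1$ be integers, $s\in\left(-\frac{1}{N-1},1\right)$, and let $\Gamma(N,k)$ be the $N^k\times N^k$ matrix with rows and columns indexed by functions $\sigma,\tau:\{1,\dots,k\}\to\{1,\dots,N\}$ and entries $\Gamma(N,k)_{\sigma\tau}=s^{|\{t:\sigma(t)\neq\tau(t)\}|}$ (the Gram matrix of the states $|\psi_{\sigma(1)}\rangle\otimes\cdots\otimes|\psi_{\sigma(k)}\rangle$ where $|\psi_1\rangle,\dots,|\psi_N\rangle$ are unit vectors with pairwise inner products $s$). Then there exists an $N^k\times N^k$ positive semidefinite matrix $Z(N,k)$, all of whose diagonal entries equal $1/N^k$, such that $$\operatorname{tr}\left[\Gamma(N,k)Z(N,k)\right]=\begin{cases}(1-s)^k, & s\in[0,1),\\ \left[1+(N-1)s\right]^k, & s\in\left(-\frac{1}{N-1},0\right].\end{cases}$$ *)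

theory Defs
  imports Complex_Main "HOL-Library.FuncSet"
begin

text \<open>Index set: functions sigma from {0..<k} to {0..<N} (0-based version of
  {1..k} -> {1..N}), extensional outside {0..<k}.\<close>
definition idx :: "nat \<Rightarrow> nat \<Rightarrow> (nat \<Rightarrow> nat) set" where
  "idx N k = ({0..<k} \<rightarrow>\<^sub>E {0..<N})"

definition hamming :: "nat \<Rightarrow> (nat \<Rightarrow> nat) \<Rightarrow> (nat \<Rightarrow> nat) \<Rightarrow> nat" where
  "hamming k \<sigma> \<tau> = card {t \<in> {0..<k}. \<sigma> t \<noteq> \<tau> t}"

definition Gamma :: "real \<Rightarrow> nat \<Rightarrow> (nat \<Rightarrow> nat) \<Rightarrow> (nat \<Rightarrow> nat) \<Rightarrow> complex" where
  "Gamma s k \<sigma> \<tau> = complex_of_real (s ^ hamming k \<sigma> \<tau>)"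

definition psd_on :: "'i set \<Rightarrow> ('i \<Rightarrow> 'i \<Rightarrow> complex) \<Rightarrow> bool" where
  "psd_on I Z \<longleftrightarrow>
     (\<forall>\<sigma>\<in>I. \<forall>\<tau>\<in>I. Z \<tau> \<sigma> = cnj (Z \<sigma> \<tau>)) \<and>
     (\<forall>x :: 'i \<Rightarrow> complex.
        Im (\<Sum>\<sigma>\<in>I. \<Sum>\<tau>\<in>I. cnj (x \<sigma>) * Z \<sigma> \<tau> * x \<tau>) = 0 \<and>
        Re (\<Sum>\<sigma>\<in>I. \<Sum>\<tau>\<in>I. cnj (x \<sigma>) * Z \<sigma> \<tau> * x \<tau>) \<ge> 0)"

definition trace_prod :: "'i set \<Rightarrow> ('i \<Rightarrow> 'i \<Rightarrow> complex) \<Rightarrow> ('i \<Rightarrow> 'i \<Rightarrow> complex) \<Rightarrow> complex" where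
  "trace_prod I A B = (\<Sum>\<sigma>\<in>I. \<Sum>\<tau>\<in>I. A \<sigma> \<tau> * B \<tau> \<sigma>)"

end

theory Submission
  imports Defs
begin

text \<open>Take \<open>Z\<^sub>\<sigma>\<^sub>\<tau> = c\<^bsup>d(\<sigma>,\<tau>)\<^esup> / N\<^sup>k\<close>, where \<open>d\<close> is the Hamming distance,
  \<open>c = -1/(N-1)\<close> for \<open>s \<ge> 0\<close> and \<open>c = 1\<close> for \<open>s < 0\<close>. Since \<open>c\<^sup>d\<close> factors over the
  coordinates, \<open>Z\<close> is the \<open>k\<close>-th tensor power of the \<open>N \<times> N\<close> matrix with entries
  \<open>1/N\<close> on and \<open>c/N\<close> off the diagonal. That matrix is the Gram matrix of the vertices of a
  centred regular simplex (for \<open>c = -1/(N-1)\<close>) or of \<open>N\<close> copies of one vector (for \<open>c = 1\<close>),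
  so \<open>Z\<close> is a Gram matrix of tensor products and hence positive semidefinite. By the same
  factorisation every row of \<open>(sc)\<^sup>d\<close> sums to \<open>(1 + (N-1)sc)\<^sup>k\<close>, which gives
  \<open>tr(\<Gamma>Z) = (1 + (N-1)sc)\<^sup>k\<close>.\<close>

lemma psd_on_gram:
  fixes V :: "'r \<Rightarrow> 'i \<Rightarrow> complex"
  assumes Z: "\<And>\<sigma> \<tau>. \<sigma> \<in> I \<Longrightarrow> \<tau> \<in> I \<Longrightarrow> Z \<sigma> \<tau> = (\<Sum>\<rho>\<in>R. cnj (V \<rho> \<sigma>) * V \<rho> \<tau>)"
  shows "psd_on I Z"
  unfolding psd_on_def
proof (intro conjI ballI allI)
  fix \<sigma> \<tau> assume "\<sigma> \<in> I" "\<tau> \<in> I"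
  then show "Z \<tau> \<sigma> = cnj (Z \<sigma> \<tau>)" by (simp add: Z mult.commute)
next
  fix x :: "'i \<Rightarrow> complex"
  define y where "y \<rho> = (\<Sum>\<tau>\<in>I. V \<rho> \<tau> * x \<tau>)" for \<rho>
  have "(\<Sum>\<sigma>\<in>I. \<Sum>\<tau>\<in>I. cnj (x \<sigma>) * Z \<sigma> \<tau> * x \<tau>)
      = (\<Sum>\<sigma>\<in>I. \<Sum>\<tau>\<in>I. \<Sum>\<rho>\<in>R. cnj (V \<rho> \<sigma> * x \<sigma>) * (V \<rho> \<tau> * x \<tau>))"
    by (intro sum.cong refl) (simp add: Z sum_distrib_left sum_distrib_right mult_ac)
  also have "\<dots> = (\<Sum>\<sigma>\<in>I. \<Sum>\<rho>\<in>R. \<Sum>\<tau>\<in>I. cnj (V \<rho> \<sigma> * x \<sigma>) * (V \<rho> \<tau> * x \<tau>))"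
    by (intro sum.cong refl) (rule sum.swap)
  also have "\<dots> = (\<Sum>\<rho>\<in>R. \<Sum>\<sigma>\<in>I. \<Sum>\<tau>\<in>I. cnj (V \<rho> \<sigma> * x \<sigma>) * (V \<rho> \<tau> * x \<tau>))"
    by (rule sum.swap)
  also have "\<dots> = (\<Sum>\<rho>\<in>R. (\<Sum>\<sigma>\<in>I. cnj (V \<rho> \<sigma> * x \<sigma>)) * (\<Sum>\<tau>\<in>I. V \<rho> \<tau> * x \<tau>))"
    by (simp only: sum_product)
  also have "\<dots> = (\<Sum>\<rho>\<in>R. cnj (y \<rho>) * y \<rho>)"
    by (simp add: y_def)
  also have "\<dots> = complex_of_real (\<Sum>\<rho>\<in>R. Re (y \<rho>) ^ 2 + Im (y \<rho>) ^ 2)"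
    by (simp add: complex_mult_cnj mult.commute)
  finally have "(\<Sum>\<sigma>\<in>I. \<Sum>\<tau>\<in>I. cnj (x \<sigma>) * Z \<sigma> \<tau> * x \<tau>)
      = complex_of_real (\<Sum>\<rho>\<in>R. Re (y \<rho>) ^ 2 + Im (y \<rho>) ^ 2)" .
  then show "Im (\<Sum>\<sigma>\<in>I. \<Sum>\<tau>\<in>I. cnj (x \<sigma>) * Z \<sigma> \<tau> * x \<tau>) = 0"
    and "Re (\<Sum>\<sigma>\<in>I. \<Sum>\<tau>\<in>I. cnj (x \<sigma>) * Z \<sigma> \<tau> * x \<tau>) \<ge> 0"
    by (simp_all add: sum_nonneg)
qed

lemma hamming_commute: "hamming k \<sigma> \<tau> = hamming k \<tau> \<sigma>"
  unfolding hamming_def by (simp only: eq_commute)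

lemma hamming_self: "hamming k \<sigma> \<sigma> = 0"
  unfolding hamming_def by simp

lemma power_hamming_eq_prod:
  fixes x :: "'a :: comm_monoid_mult"
  shows "x ^ hamming k \<sigma> \<tau> = (\<Prod>t\<in>{0..<k}. if \<sigma> t = \<tau> t then 1 else x)"
proof -
  have "(\<Prod>t\<in>{0..<k}. if \<sigma> t = \<tau> t then 1 else x) = (\<Prod>t\<in>{t \<in> {0..<k}. \<sigma> t \<noteq> \<tau> t}. x)"
    by (rule prod.mono_neutral_cong_right) auto
  then show ?thesis by (simp add: hamming_def)
qed

lemma card_idx: "card (idx N k) = N ^ k"
  unfolding idx_def by (simp add: card_funcsetE)

lemma idx_apply_less: "\<sigma> \<in> idx N k \<Longrightarrow> t < k \<Longrightarrow> \<sigma> t < N"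
  unfolding idx_def by auto

lemma sum_idx_prod:
  fixes f :: "nat \<Rightarrow> nat \<Rightarrow> 'a :: comm_semiring_1"
  shows "(\<Sum>\<rho>\<in>idx N k. \<Prod>t\<in>{0..<k}. f t (\<rho> t)) = (\<Prod>t\<in>{0..<k}. \<Sum>a\<in>{0..<N}. f t a)"
  unfolding idx_def by (rule prod_sum_PiE[symmetric]) auto

lemma sum_if_eq_else:
  fixes x :: "'a :: comm_ring_1"
  assumes "finite A" "b \<in> A"
  shows "(\<Sum>a\<in>A. if b = a then 1 else x) = 1 + (of_nat (card A) - 1) * x"
proof -
  have "(\<Sum>a\<in>A - {b}. if b = a then 1 else x) = (\<Sum>a\<in>A - {b}. x)"
    by (rule sum.cong) auto
  also have "\<dots> = of_nat (card A - 1) * x"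
    using assms by (simp add: card_Diff_singleton)
  finally have "(\<Sum>a\<in>A - {b}. if b = a then 1 else x) = of_nat (card A - 1) * x" .
  moreover have "card A \<ge> 1"
    using assms by (auto simp: Suc_le_eq card_gt_0_iff)
  ultimately show ?thesis
    by (simp add: sum.remove[OF assms] of_nat_diff)
qed

lemma sum_power_hamming:
  fixes x :: "'a :: comm_ring_1"
  assumes "\<sigma> \<in> idx N k"
  shows "(\<Sum>\<tau>\<in>idx N k. x ^ hamming k \<sigma> \<tau>) = (1 + (of_nat N - 1) * x) ^ k"
proof -
  have "(\<Sum>\<tau>\<in>idx N k. x ^ hamming k \<sigma> \<tau>)
      = (\<Prod>t\<in>{0..<k}. \<Sum>a\<in>{0..<N}. if \<sigma> t = a then 1 else x)"
    by (simp only: power_hamming_eq_prod) (rule sum_idx_prod)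
  also have "\<dots> = (\<Prod>t\<in>{0..<k}. 1 + (of_nat N - 1) * x)"
    using assms by (intro prod.cong refl) (auto simp: sum_if_eq_else idx_apply_less)
  finally show ?thesis by simp
qed

lemma prod_gram_eq_sum_prod:
  fixes v :: "nat \<Rightarrow> nat \<Rightarrow> 'a :: comm_semiring_1"
  assumes "\<sigma> \<in> idx N k" "\<tau> \<in> idx N k"
    and g: "\<And>b b'. b < N \<Longrightarrow> b' < N \<Longrightarrow> g b b' = (\<Sum>a\<in>{0..<M}. v a b * v a b')"
  shows "(\<Prod>t\<in>{0..<k}. g (\<sigma> t) (\<tau> t))
       = (\<Sum>\<rho>\<in>idx M k. (\<Prod>t\<in>{0..<k}. v (\<rho> t) (\<sigma> t)) * (\<Prod>t\<in>{0..<k}. v (\<rho> t) (\<tau> t)))"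
proof -
  have "(\<Prod>t\<in>{0..<k}. g (\<sigma> t) (\<tau> t)) = (\<Prod>t\<in>{0..<k}. \<Sum>a\<in>{0..<M}. v a (\<sigma> t) * v a (\<tau> t))"
    using assms(1,2) by (intro prod.cong refl g) (auto simp: idx_apply_less)
  also have "\<dots> = (\<Sum>\<rho>\<in>idx M k. \<Prod>t\<in>{0..<k}. v (\<rho> t) (\<sigma> t) * v (\<rho> t) (\<tau> t))"
    by (rule sum_idx_prod[symmetric])
  finally show ?thesis
    by (simp only: prod.distrib)
qed

lemma psd_on_hamming_kernel:
  fixes c :: real and v :: "nat \<Rightarrow> nat \<Rightarrow> real"
  assumes "\<And>b b'. b < N \<Longrightarrow> b' < N \<Longrightarrow>
      (if b = b' then 1 else c) / real N = (\<Sum>a\<in>{0..<M}. v a b * v a b')"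
  shows "psd_on (idx N k) (\<lambda>\<sigma> \<tau>. complex_of_real (c ^ hamming k \<sigma> \<tau> / real N ^ k))"
proof (rule psd_on_gram)
  fix \<sigma> \<tau> assume "\<sigma> \<in> idx N k" "\<tau> \<in> idx N k"
  have "c ^ hamming k \<sigma> \<tau> / real N ^ k = (\<Prod>t\<in>{0..<k}. (if \<sigma> t = \<tau> t then 1 else c) / real N)"
    by (simp add: power_hamming_eq_prod prod_dividef)
  also have "\<dots> = (\<Sum>\<rho>\<in>idx M k. (\<Prod>t\<in>{0..<k}. v (\<rho> t) (\<sigma> t)) * (\<Prod>t\<in>{0..<k}. v (\<rho> t) (\<tau> t)))"
    by (rule prod_gram_eq_sum_prod[OF \<open>\<sigma> \<in> idx N k\<close> \<open>\<tau> \<in> idx N k\<close> assms])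
  finally show "complex_of_real (c ^ hamming k \<sigma> \<tau> / real N ^ k)
      = (\<Sum>\<rho>\<in>idx M k. cnj (complex_of_real (\<Prod>t\<in>{0..<k}. v (\<rho> t) (\<sigma> t)))
                        * complex_of_real (\<Prod>t\<in>{0..<k}. v (\<rho> t) (\<tau> t)))"
    by simp
qed

definition simplex_vertex :: "nat \<Rightarrow> nat \<Rightarrow> nat \<Rightarrow> real" where
  "simplex_vertex N a b = ((if a = b then 1 else 0) - 1 / real N) / sqrt (real N - 1)"

lemma inner_simplex_vertex:
  assumes "N \<ge> 2" "b < N" "b' < N"
  shows "(\<Sum>a\<in>{0..<N}. simplex_vertex N a b * simplex_vertex N a b')
       = (if b = b' then 1 else - 1 / (real N - 1)) / real N"
proof -
  have "(\<Sum>a\<in>{0..<N}. ((if a = b then 1 else 0) - 1 / real N) * ((if a = b' then 1 else 0) - 1 / real N))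
      = (\<Sum>a\<in>{0..<N}. (if a = b then if b = b' then 1 else 0 else 0)
          - (if a = b then 1 / real N else 0) - (if a = b' then 1 / real N else 0) + 1 / real N ^ 2)"
    using assms by (intro sum.cong) (auto simp: power2_eq_square field_simps)
  also have "\<dots> = (if b = b' then 1 else 0) - 1 / real N - 1 / real N + real N * (1 / real N ^ 2)"
    using assms by (simp add: sum.distrib sum_subtractf)
  also have "\<dots> = (if b = b' then 1 else 0) - 1 / real N"
    using assms by (simp add: power2_eq_square)
  finally have "(\<Sum>a\<in>{0..<N}. ((if a = b then 1 else 0) - 1 / real N) * ((if a = b' then 1 else 0) - 1 / real N))
      = (if b = b' then 1 else 0) - 1 / real N" .
  moreover have "sqrt (real N - 1) * sqrt (real N - 1) = real N - 1"
    using assms by simp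
  ultimately have "(\<Sum>a\<in>{0..<N}. simplex_vertex N a b * simplex_vertex N a b')
      = ((if b = b' then 1 else 0) - 1 / real N) / (real N - 1)"
    by (simp add: simplex_vertex_def sum_divide_distrib[symmetric])
  also have "\<dots> = (if b = b' then 1 else - 1 / (real N - 1)) / real N"
    using assms by (auto simp: field_simps)
  finally show ?thesis .
qed

lemma trace_prod_Gamma_hamming_kernel:
  assumes "N \<ge> 1"
  shows "trace_prod (idx N k) (Gamma s k) (\<lambda>\<sigma> \<tau>. complex_of_real (c ^ hamming k \<sigma> \<tau> / real N ^ k))
       = complex_of_real ((1 + (real N - 1) * (s * c)) ^ k)"
proof -
  have "trace_prod (idx N k) (Gamma s k) (\<lambda>\<sigma> \<tau>. complex_of_real (c ^ hamming k \<sigma> \<tau> / real N ^ k))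
      = complex_of_real (\<Sum>\<sigma>\<in>idx N k. (\<Sum>\<tau>\<in>idx N k. (s * c) ^ hamming k \<sigma> \<tau>) / real N ^ k)"
    unfolding trace_prod_def Gamma_def
    by (simp add: hamming_commute[of k _ \<sigma> for \<sigma>] power_mult_distrib sum_divide_distrib)
  also have "\<dots> = complex_of_real (\<Sum>\<sigma>\<in>idx N k. (1 + (real N - 1) * (s * c)) ^ k / real N ^ k)"
    by (simp add: sum_power_hamming)
  also have "\<dots> = complex_of_real ((1 + (real N - 1) * (s * c)) ^ k)"
    using assms by (simp add: card_idx)
  finally show ?thesis .
qed

theorem theorem4:
  fixes N k :: nat and s :: real
  assumes "N \<ge> 2" and "k \<ge> 1"
    and "- 1 / (real N - 1) < s" and "s < 1"
  shows "\<exists>Z :: (nat \<Rightarrow> nat) \<Rightarrow> (nat \<Rightarrow> nat) \<Rightarrow> complex.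
           psd_on (idx N k) Z \<and>
           (\<forall>\<sigma>\<in>idx N k. Z \<sigma> \<sigma> = complex_of_real (1 / real N ^ k)) \<and>
           trace_prod (idx N k) (Gamma s k) Z =
             complex_of_real (if 0 \<le> s then (1 - s) ^ k else (1 + (real N - 1) * s) ^ k)"
proof -
  define c :: real where "c = (if 0 \<le> s then - 1 / (real N - 1) else 1)"
  let ?Z = "\<lambda>\<sigma> \<tau>. complex_of_real (c ^ hamming k \<sigma> \<tau> / real N ^ k)"
  have "psd_on (idx N k) ?Z"
  proof (cases "0 \<le> s")
    case True
    have "(if b = b' then 1 else c) / real N = (\<Sum>a\<in>{0..<N}. simplex_vertex N a b * simplex_vertex N a b')"
      if "b < N" "b' < N" for b b'
      using True assms(1) that by (simp add: c_def inner_simplex_vertex)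
    then show ?thesis by (rule psd_on_hamming_kernel)
  next
    case False
    have "(if b = b' then 1 else c) / real N = (\<Sum>a\<in>{0..<1::nat}. 1 / sqrt (real N) * (1 / sqrt (real N)))"
      for b b' :: nat
      using False assms(1) by (simp add: c_def)
    then show ?thesis by (rule psd_on_hamming_kernel)
  qed
  moreover have "\<forall>\<sigma>\<in>idx N k. ?Z \<sigma> \<sigma> = complex_of_real (1 / real N ^ k)"
    by (simp add: hamming_self)
  moreover have "trace_prod (idx N k) (Gamma s k) ?Z
      = complex_of_real (if 0 \<le> s then (1 - s) ^ k else (1 + (real N - 1) * s) ^ k)"
  proof -
    have "1 + (real N - 1) * (s * c) = (if 0 \<le> s then 1 - s else 1 + (real N - 1) * s)"
      using assms(1) by (simp add: c_def)
    then show ?thesis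
      using assms(1) by (subst trace_prod_Gamma_hamming_kernel) simp_all
  qed
  ultimately show ?thesis by blast
qed

end
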